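(* Let $\mathfrak g$ be of type $A_n$, $b\in\mathcal B(\infty)$, $i\in I$, and let $m=m_i(b)$ and $m^\ast=m_i^\ast(b)$. Then for $1\le s\le i$, $\Sigma^\ast_s(\widetilde f_i(b))=\Sigma^\ast_s(b)+1$ if $m=1$ and $s=1$, and $\Sigma^\ast_s(\widetilde f_i(b))=\Sigma^\ast_s(b)$ otherwise; and for $1\le s\le n+1-i$, $\Sigma_s(\widetilde f_i^\ast(b))=\Sigma_s(b)+1$ if $m^\ast=1$ and $s=1$, and $\Sigma_s(\widetilde f_i^\ast(b))=\Sigma_s(b)$ otherwise.
   Context: $I=\{1,\dots,n\}$. $\mathcal I=\{(s,t)\in\mathbb Z_{>0}\times I:s+t\le n+1\}$; $\mathcal B(\infty)$ is the set of $b=(b_{s,t})_{(s,t)\in\mathcal I}\in\mathbb Z_{\ge0}^{\mathcal I}$ with $b_{1,k}\ge b_{2,k-1}\ge\dots\ge b_{k,1}$ for $1\le k\le n$. Convention: $b_{s,t}=0$, $\mathbf e_{s,t}=0$ for $(s,t)\notin\mathcal I$. $\partial_{s,t}(b)=b_{s,t}-b_{s,t+1}-b_{s+1,t-1}+b_{s+1,t}$, $\partial^\ast_{s,t}(b)=b_{s-1,t}-b_{s-1,t+1}-b_{s,t-1}+b_{s,t}$. For $1\le k\le n+1-i$: $\Sigma_k(b)=\sum_{s=k}^{n+1-i}\partial_{s,i}(b)$, $m_i(b)$ the smallest $k$ maximizing $\Sigma_k(b)$, $\widetilde f_i(b)=b+\mathbf e_{m_i(b),i}$. For $1\le k\le i$: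 $\Sigma^\ast_k(b)=\sum_{t=1}^k\partial^\ast_{t,i+1-t}(b)$, $m_i^\ast(b)$ the smallest $k$ maximizing $\Sigma^\ast_k(b)$, $\widetilde f_i^\ast(b)=b+\sum_{t=1}^{m_i^\ast(b)}(\mathbf e_{t,i+1-t}-\mathbf e_{t-1,i+1-t})$. *)

theory Defs
  imports Main
begin

text \<open>Elements b of B(infinity) are represented as functions nat => nat => int,
  required to vanish outside \<I> (the convention b_{s,t} = 0 off \<I>).\<close>

definition Idx :: "nat \<Rightarrow> (nat \<times> nat) set" where
  "Idx n = {(s,t). 1 \<le> s \<and> 1 \<le> t \<and> t \<le> n \<and> s + t \<le> n + 1}"

definition Binf :: "nat \<Rightarrow> (nat \<Rightarrow> nat \<Rightarrow> int) set" where
  "Binf n = {b. (\<forall>s t. (s,t) \<notin> Idx n \<longrightarrow> b s t = 0)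
              \<and> (\<forall>s t. (s,t) \<in> Idx n \<longrightarrow> 0 \<le> b s t)
              \<and> (\<forall>k s. 1 \<le> k \<and> k \<le> n \<and> 1 \<le> s \<and> s < k \<longrightarrow> b (s+1) (k-s) \<le> b s (k+1-s))}"

definition ev :: "nat \<Rightarrow> nat \<Rightarrow> nat \<Rightarrow> nat \<Rightarrow> nat \<Rightarrow> int" where
  "ev n s t = (\<lambda>s' t'. if (s',t') = (s,t) \<and> (s,t) \<in> Idx n then 1 else 0)"

definition part :: "(nat \<Rightarrow> nat \<Rightarrow> int) \<Rightarrow> nat \<Rightarrow> nat \<Rightarrow> int" where
  "part b s t = b s t - b s (t+1) - b (s+1) (t-1) + b (s+1) t"

definition partst :: "(nat \<Rightarrow> nat \<Rightarrow> int) \<Rightarrow> nat \<Rightarrow> nat \<Rightarrow> int" where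
  "partst b s t = b (s-1) t - b (s-1) (t+1) - b s (t-1) + b s t"

definition Sig :: "nat \<Rightarrow> nat \<Rightarrow> (nat \<Rightarrow> nat \<Rightarrow> int) \<Rightarrow> nat \<Rightarrow> int" where
  "Sig n i b k = (\<Sum>s=k..n+1-i. part b s i)"

definition Sigst :: "nat \<Rightarrow> (nat \<Rightarrow> nat \<Rightarrow> int) \<Rightarrow> nat \<Rightarrow> int" where
  "Sigst i b k = (\<Sum>t=1..k. partst b t (i+1-t))"

definition mi :: "nat \<Rightarrow> nat \<Rightarrow> (nat \<Rightarrow> nat \<Rightarrow> int) \<Rightarrow> nat" where
  "mi n i b = (LEAST k. 1 \<le> k \<and> k \<le> n+1-i \<and>
                 (\<forall>k'. 1 \<le> k' \<and> k' \<le> n+1-i \<longrightarrow> Sig n i b k' \<le> Sig n i b k))"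

definition mist :: "nat \<Rightarrow> (nat \<Rightarrow> nat \<Rightarrow> int) \<Rightarrow> nat" where
  "mist i b = (LEAST k. 1 \<le> k \<and> k \<le> i \<and>
                 (\<forall>k'. 1 \<le> k' \<and> k' \<le> i \<longrightarrow> Sigst i b k' \<le> Sigst i b k))"

definition fti :: "nat \<Rightarrow> nat \<Rightarrow> (nat \<Rightarrow> nat \<Rightarrow> int) \<Rightarrow> nat \<Rightarrow> nat \<Rightarrow> int" where
  "fti n i b = (\<lambda>s t. b s t + ev n (mi n i b) i s t)"

definition ftist :: "nat \<Rightarrow> nat \<Rightarrow> (nat \<Rightarrow> nat \<Rightarrow> int) \<Rightarrow> nat \<Rightarrow> nat \<Rightarrow> int" where
  "ftist n i b = (\<lambda>s t. b s t + (\<Sum>u=1..mist i b. ev n u (i+1-u) s t - ev n (u-1) (i+1-u) s t))"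

end

theory Submission
  imports Defs
begin

text \<open>Since row 0 of b vanishes, Sigst i b s telescopes to b(s, i+1-s) - b(s, i-s), and
  the operator f_i changes only the entry (m, i), which lies on the antidiagonal s + t = i + 1
  exactly when m = 1.  Dually, f*_i adds 1 on the first m* cells of the antidiagonal
  s + t = i + 1 and subtracts 1 on the first m* - 1 cells of s + t = i.  In the differences
  part b s i these changes are visible only for s = 1, through the entries (1, i) and (2, i - 1),
  and they cancel unless m* = 1.\<close>

lemma Binf_row_zero: "b \<in> Binf n \<Longrightarrow> b 0 t = 0"
  by (simp add: Binf_def Idx_def)

lemma Sigst_telescope:
  assumes "\<And>t. b 0 t = 0" and "s \<le> i"
  shows "Sigst i b s = b s (i + 1 - s) - b s (i - s)"
  using assms(2)
proof (induction s)
  case 0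
  then show ?case by (simp add: Sigst_def assms(1))
next
  case (Suc s)
  have "Sigst i b (Suc s) = Sigst i b s + partst b (Suc s) (i + 1 - Suc s)"
    by (simp add: Sigst_def)
  also have "\<dots> = b (Suc s) (i + 1 - Suc s) - b (Suc s) (i - Suc s)"
    using Suc by (simp add: partst_def Suc_diff_le diff_Suc)
  finally show ?case .
qed

lemma Sigst_fti:
  assumes "\<And>t. b 0 t = 0" and "1 \<le> s" "s \<le> i" "i \<le> n"
  shows "Sigst i (fti n i b) s = Sigst i b s + of_bool (s = 1 \<and> mi n i b = 1)"
proof -
  have "fti n i b 0 t = 0" for t
    using assms(1) by (simp add: fti_def ev_def Idx_def)
  then have "Sigst i (fti n i b) s = fti n i b s (i + 1 - s) - fti n i b s (i - s)"
    using assms(3) by (rule Sigst_telescope)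
  also have "\<dots> = b s (i + 1 - s) - b s (i - s) + of_bool (s = 1 \<and> mi n i b = 1)"
    using assms(2-4) by (auto simp: fti_def ev_def Idx_def)
  finally show ?thesis
    using Sigst_telescope[of b s i, OF assms(1,3)] by simp
qed

lemma Least_maximizer_bounds:
  fixes f :: "nat \<Rightarrow> 'a::linorder"
  assumes "1 \<le> N"
  defines "m \<equiv> LEAST k. 1 \<le> k \<and> k \<le> N \<and> (\<forall>k'. 1 \<le> k' \<and> k' \<le> N \<longrightarrow> f k' \<le> f k)"
  shows "1 \<le> m \<and> m \<le> N"
proof -
  have fin: "finite (f ` {1..N})" and ne: "f ` {1..N} \<noteq> {}"
    using assms(1) by auto
  obtain k where "k \<in> {1..N}" "f k = Max (f ` {1..N})"
    using Max_in[OF fin ne] by auto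
  then have "1 \<le> k \<and> k \<le> N \<and> (\<forall>k'. 1 \<le> k' \<and> k' \<le> N \<longrightarrow> f k' \<le> f k)"
    using fin by auto
  then show ?thesis
    unfolding m_def by (rule LeastI2) simp
qed

lemma mist_bounds: "1 \<le> i \<Longrightarrow> 1 \<le> mist i b \<and> mist i b \<le> i"
  unfolding mist_def by (rule Least_maximizer_bounds)

lemma sum_ev_shifted:
  assumes "finite A"
  shows "(\<Sum>u\<in>A. ev n (u - j) (f u) s t) = of_bool (s + j \<in> A \<and> t = f (s + j) \<and> (s, t) \<in> Idx n)"
proof -
  have "(\<Sum>u\<in>A. ev n (u - j) (f u) s t)
      = (\<Sum>u\<in>A. if u = s + j then of_bool (t = f (s + j) \<and> (s, t) \<in> Idx n) else 0)"
    by (rule sum.cong) (auto simp: ev_def Idx_def)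
  also have "\<dots> = of_bool (s + j \<in> A \<and> t = f (s + j) \<and> (s, t) \<in> Idx n)"
    using assms by (simp add: sum.delta')
  finally show ?thesis .
qed

lemma ftist_apply:
  assumes "1 \<le> i" "i \<le> n"
  shows "ftist n i b s t = b s t
           + of_bool (1 \<le> s \<and> s \<le> mist i b \<and> s + t = i + 1)
           - of_bool (1 \<le> s \<and> s < mist i b \<and> s + t = i)"
proof -
  have "mist i b \<le> i"
    using mist_bounds[OF assms(1)] by simp
  then show ?thesis
    using sum_ev_shifted[of "{1..mist i b}" n 0 "\<lambda>u. i + 1 - u" s t]
          sum_ev_shifted[of "{1..mist i b}" n 1 "\<lambda>u. i + 1 - u" s t] assms
    by (auto simp: ftist_def sum_subtractf Idx_def)
qed

lemma part_ftist:
  assumes "1 \<le> i" "i \<le> n" "1 \<le> s"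
  shows "part (ftist n i b) s i = part b s i + of_bool (s = 1 \<and> mist i b = 1)"
  using mist_bounds[OF assms(1), of b] assms
  by (auto simp: part_def ftist_apply)

lemma Sig_ftist:
  assumes "1 \<le> i" "i \<le> n" "1 \<le> k"
  shows "Sig n i (ftist n i b) k = Sig n i b k + of_bool (k = 1 \<and> mist i b = 1)"
proof -
  have "Sig n i (ftist n i b) k
      = Sig n i b k + (\<Sum>s=k..n+1-i. if s = 1 then of_bool (mist i b = 1) else 0)"
    using assms by (simp add: Sig_def part_ftist sum.distrib)
  also have "\<dots> = Sig n i b k + of_bool (k = 1 \<and> mist i b = 1)"
    using assms by (auto simp: sum.delta)
  finally show ?thesis .
qed

theorem lemma6p8:
  fixes n i :: nat and b :: "nat \<Rightarrow> nat \<Rightarrow> int"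
  assumes "b \<in> Binf n" and "1 \<le> i" and "i \<le> n"
  shows "(\<forall>s. 1 \<le> s \<and> s \<le> i \<longrightarrow>
            Sigst i (fti n i b) s =
              (if mi n i b = 1 \<and> s = 1 then Sigst i b s + 1 else Sigst i b s))
       \<and> (\<forall>s. 1 \<le> s \<and> s \<le> n + 1 - i \<longrightarrow>
            Sig n i (ftist n i b) s =
              (if mist i b = 1 \<and> s = 1 then Sig n i b s + 1 else Sig n i b s))"
proof (intro conjI allI impI)
  fix s assume "1 \<le> s \<and> s \<le> i"
  then show "Sigst i (fti n i b) s =
      (if mi n i b = 1 \<and> s = 1 then Sigst i b s + 1 else Sigst i b s)"
    using Sigst_fti[of b s i n] Binf_row_zero[OF assms(1)] assms(3) by auto
next
  fix s assume "1 \<le> s \<and> s \<le> n + 1 - i"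
  then show "Sig n i (ftist n i b) s =
      (if mist i b = 1 \<and> s = 1 then Sig n i b s + 1 else Sig n i b s)"
    using Sig_ftist[OF assms(2,3)] by auto
qed

end
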